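(* Let $H$ be a strictly $2$-balanced graph with $h$ vertices and $k$ edges. For $n\ge h$ let $G^H$ be the $k$-uniform hypergraph whose vertex set is the edge set of $K_n$ and whose hyperedges are the $k$-sets of edges of $K_n$ forming a copy of $H$. Let $\Delta=\frac{2k\,(n-2)_{h-2}}{|\mathrm{Aut}(H)|}$. Then (1) $G^H$ is $\Delta$-regular; (2) for each $\ell\in\{2,\dots,k-1\}$, $\Delta_\ell(G^H)=o\left(\Delta^{\frac{k-\ell}{k-1}}\right)$ as $n\to\infty$; (3) $\Gamma(G^H)=o(\Delta)$.
   Context: $m_2(H)=\max_{F\subseteq H,|V(F)|\ge3}\frac{|E(F)|-1}{|V(F)|-2}$; $H$ (with $|E(H)|\ge3$) is strictly $2$-balanced if the maximum is attained uniquely at $F=H$. $(n)_j=n(n-1)\cdots(n-j+1)$. For a hypergraph $G$, $\Delta_\ell(G)=\max_{|S|=\ell}|\{e\in E(G):S\subseteq e\}|$, and $\Gamma(G)$ is the maximum over distinct vertices $v,v'$ of the number of $(k-1)$-sets $S$ of vertices with $S\cup\{v\}$ and $S\cup\{v'\}$ both hyperedges. *)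

theory Defs
  imports "HOL-Library.Landau_Symbols" "HOL-Combinatorics.Permutations"
begin

definition simple_graph :: "'a set \<Rightarrow> 'a set set \<Rightarrow> bool" where
  "simple_graph V E \<longleftrightarrow> finite V \<and> (\<forall>e\<in>E. e \<subseteq> V \<and> card e = 2)"

definition subgraph :: "'a set \<Rightarrow> 'a set set \<Rightarrow> 'a set \<Rightarrow> 'a set set \<Rightarrow> bool" where
  "subgraph VF EF V E \<longleftrightarrow> VF \<subseteq> V \<and> EF \<subseteq> E \<and> (\<forall>e\<in>EF. e \<subseteq> VF)"

definition d2 :: "'a set \<Rightarrow> 'a set set \<Rightarrow> real" where
  "d2 V E = (real (card E) - 1) / (real (card V) - 2)"

definition m2 :: "'a set \<Rightarrow> 'a set set \<Rightarrow> real" where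
  "m2 V E = Max {d2 VF EF | VF EF. subgraph VF EF V E \<and> card VF \<ge> 3}"

definition strictly_2_balanced :: "'a set \<Rightarrow> 'a set set \<Rightarrow> bool" where
  "strictly_2_balanced V E \<longleftrightarrow> card E \<ge> 3 \<and> card V \<ge> 3 \<and> d2 V E = m2 V E \<and>
     (\<forall>VF EF. subgraph VF EF V E \<and> card VF \<ge> 3 \<and> d2 VF EF = m2 V E \<longrightarrow> VF = V \<and> EF = E)"

definition Aut :: "'a set \<Rightarrow> 'a set set \<Rightarrow> ('a \<Rightarrow> 'a) set" where
  "Aut V E = {\<sigma>. \<sigma> permutes V \<and> (\<lambda>e. \<sigma> ` e) ` E = E}"

definition falling :: "nat \<Rightarrow> nat \<Rightarrow> nat" where
  "falling n j = (\<Prod>i<j. (n - i))"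

definition Kedges :: "nat \<Rightarrow> nat set set" where
  "Kedges n = {e. e \<subseteq> {..<n} \<and> card e = 2}"

definition copies :: "'a set \<Rightarrow> 'a set set \<Rightarrow> nat \<Rightarrow> nat set set set" where
  "copies V E n = {(\<lambda>e. f ` e) ` E | f. inj_on f V \<and> f ` V \<subseteq> {..<n}}"

definition degree :: "'v set set \<Rightarrow> 'v \<Rightarrow> nat" where
  "degree Es v = card {e\<in>Es. v \<in> e}"

definition max_codegree :: "'v set \<Rightarrow> 'v set set \<Rightarrow> nat \<Rightarrow> nat" where
  "max_codegree Vt Es l = Max {card {e\<in>Es. S \<subseteq> e} | S. S \<subseteq> Vt \<and> card S = l}"

definition Gamma :: "'v set \<Rightarrow> 'v set set \<Rightarrow> nat \<Rightarrow> nat" where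
  "Gamma Vt Es k = Max {card {S. S \<subseteq> Vt \<and> card S = k - 1 \<and> insert v S \<in> Es \<and> insert v' S \<in> Es}
                        | v v'. v \<in> Vt \<and> v' \<in> Vt \<and> v \<noteq> v'}"

end

theory Submission
  imports Defs "HOL-Library.FuncSet"
begin

text \<open>
  Every copy of H in K_n is the edge image of exactly |Aut(H)| injections V(H) \<rightarrow> [n], and a fixed
  edge of H is mapped onto a fixed edge of K_n by 2 (n-2)_(h-2) of them; double counting gives
  regularity with degree \<Delta> = \<Theta>(n^(h-2)).

  A copy containing an l-set S of edges of K_n comes from an injection mapping the vertex set W of
  some l-set T of edges of H into the at most 2l vertices of S; there are O(n^(h-|W|)) such
  injections. Strict 2-balancedness, d_2(W,T) < d_2(H), is exactly the inequality
  h - |W| < (h-2)(k-l)/(k-1), so the codegree is o(\<Delta>^((k-l)/(k-1))).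

  Deleting a vertex of degree at most one would not lower d_2, so H has minimum degree 2. Hence if
  S + v and S + v' are both copies, the vertices of v' are covered by S, and the copy S + v maps
  three vertices of H into the four vertices of v \<union> v': at most O(n^(h-3)) = o(\<Delta>) choices.
\<close>

section \<open>Strictly 2-balanced graphs\<close>

lemma simple_graph_finite_edges: "simple_graph V E \<Longrightarrow> finite E"
  unfolding simple_graph_def by (meson Pow_iff finite_Pow_iff finite_subset subsetI)

lemma d2_le_m2:
  assumes "simple_graph V E" "subgraph VF EF V E" "card VF \<ge> 3"
  shows "d2 VF EF \<le> m2 V E"
proof -
  have "{d2 VF EF | VF EF. subgraph VF EF V E \<and> card VF \<ge> 3} \<subseteq> (\<lambda>(A, B). d2 A B) ` (Pow V \<times> Pow E)"
    unfolding subgraph_def by auto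
  moreover have "finite (Pow V \<times> Pow E)"
    using assms(1) simple_graph_finite_edges[OF assms(1)] by (simp add: simple_graph_def)
  ultimately show ?thesis
    unfolding m2_def using assms(2,3) by (intro Max_ge) (auto dest: finite_subset)
qed

lemma d2_less_if_proper_subgraph:
  assumes "simple_graph V E" "strictly_2_balanced V E" "subgraph VF EF V E" "card VF \<ge> 3"
    and "(VF, EF) \<noteq> (V, E)"
  shows "d2 VF EF < d2 V E"
  using d2_le_m2[OF assms(1,3,4)] assms(2-5) unfolding strictly_2_balanced_def
  by (metis order.not_eq_order_implies_strict prod.inject)

lemma card_Un_of_card_2:
  assumes "card e1 = 2" "card e2 = 2" "e1 \<noteq> e2"
  shows "card (e1 \<union> e2) = (if e1 \<inter> e2 = {} then 4 else 3)"
proof -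
  have fin: "finite e1" "finite e2" using assms by (auto intro: card_ge_0_finite)
  have "card (e1 \<inter> e2) \<noteq> 2"
    using assms card_subset_eq[OF fin(1), of "e1 \<inter> e2"] card_subset_eq[OF fin(2), of "e1 \<inter> e2"]
    by auto
  moreover have "card (e1 \<inter> e2) \<le> 2" using assms fin by (metis Int_lower1 card_mono)
  moreover have "card (e1 \<inter> e2) = 0 \<longleftrightarrow> e1 \<inter> e2 = {}" using fin by simp
  ultimately have "card (e1 \<inter> e2) = (if e1 \<inter> e2 = {} then 0 else 1)" by auto
  then show ?thesis using card_Un_Int[OF fin] assms by (simp split: if_splits)
qed

locale strictly_2_balanced_graph =
  fixes V :: "'a set" and E :: "'a set set"
  assumes simple: "simple_graph V E" and balanced: "strictly_2_balanced V E"
begin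

lemma card_ge_3: "card V \<ge> 3" "card E \<ge> 3"
  using balanced unfolding strictly_2_balanced_def by auto

lemma d2_gt_two_edges:
  assumes "e1 \<in> E" "e2 \<in> E" "e1 \<noteq> e2"
  shows "1 / (real (card (e1 \<union> e2)) - 2) < d2 V E"
proof -
  have card_e: "card e1 = 2" "card e2 = 2"
    using assms simple unfolding simple_graph_def by auto
  have "subgraph (e1 \<union> e2) {e1, e2} V E"
    using assms simple unfolding subgraph_def simple_graph_def by auto
  moreover have "card {e1, e2} = 2" using assms(3) by simp
  then have "{e1, e2} \<noteq> E" using card_ge_3(2) by auto
  moreover have "card (e1 \<union> e2) \<ge> 3" using card_Un_of_card_2[OF card_e assms(3)] by simp
  ultimately have "d2 (e1 \<union> e2) {e1, e2} < d2 V E"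
    using d2_less_if_proper_subgraph[OF simple balanced] by blast
  then show ?thesis using assms(3) unfolding d2_def by simp
qed

lemma card_V_le_card_E: "card V \<le> card E"
proof -
  have h3: "real (card V) \<ge> 3" and k3: "real (card E) \<ge> 3"
    using card_ge_3 by auto
  show ?thesis
  proof (cases "\<exists>e1\<in>E. \<exists>e2\<in>E. e1 \<noteq> e2 \<and> e1 \<inter> e2 \<noteq> {}")
    case True
    then obtain e1 e2 where e: "e1 \<in> E" "e2 \<in> E" "e1 \<noteq> e2" "e1 \<inter> e2 \<noteq> {}" by blast
    have "card (e1 \<union> e2) = 3"
      using card_Un_of_card_2[of e1 e2] e simple unfolding simple_graph_def by simp
    then have "1 < (real (card E) - 1) / (real (card V) - 2)"
      using d2_gt_two_edges[OF e(1-3)] unfolding d2_def by simp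
    then show ?thesis using h3 by (simp add: field_simps)
  next
    case False
    then have "pairwise disjnt E" unfolding pairwise_def disjnt_def by blast
    then have "card (\<Union>E) = 2 * card E"
      using simple card_Union_disjoint[of E] unfolding simple_graph_def
      by (simp add: card_ge_0_finite)
    moreover have "card (\<Union>E) \<le> card V"
      using simple unfolding simple_graph_def by (intro card_mono) auto
    moreover obtain e1 e2 where e: "e1 \<in> E" "e2 \<in> E" "e1 \<noteq> e2"
    proof -
      have "\<not> card E \<le> Suc 0" using card_ge_3(2) by simp
      then show ?thesis using that card_le_Suc0_iff_eq[OF simple_graph_finite_edges[OF simple]] by blast
    qed
    moreover from e have "card (e1 \<union> e2) = 4"
      using card_Un_of_card_2[of e1 e2] False simple unfolding simple_graph_def by auto
    ultimately have "1 / 2 < (real (card E) - 1) / (real (card V) - 2)" "2 * card E \<le> card V"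
      using d2_gt_two_edges[OF e] unfolding d2_def by simp_all
    then show ?thesis using h3 by (simp add: field_simps)
  qed
qed

lemma degree_ge_2:
  assumes u: "u \<in> V"
  shows "2 \<le> card {e\<in>E. u \<in> e}"
  \<comment> \<open>Deleting u loses at most one edge, which for card V \<le> card E does not lower d2.\<close>
proof (rule ccontr)
  define D where "D = {e\<in>E. u \<in> e}"
  assume "\<not> 2 \<le> card {e\<in>E. u \<in> e}"
  then have D1: "card D \<le> 1" unfolding D_def by simp
  have fin: "finite V" "finite E" using simple simple_graph_finite_edges simple_graph_def by auto
  have k3: "card E \<ge> 3" using card_ge_3 by simp
  have card_rest: "card E \<le> card (E - D) + 1"
    using card_Diff_subset[of D E] card_mono[of E D] fin D1 unfolding D_def by (simp add: finite_subset)
  have rest: "subgraph (V - {u}) (E - D) V E"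
    using simple unfolding subgraph_def simple_graph_def D_def by auto
  show False
  proof (cases "card V = 3")
    case True
    have "E - D \<subseteq> {V - {u}}"
    proof
      fix e assume "e \<in> E - D"
      then have "e \<subseteq> V - {u}" "card e = 2" using rest simple unfolding subgraph_def simple_graph_def by auto
      then show "e \<in> {V - {u}}" using card_subset_eq[of "V - {u}" e] fin u True by auto
    qed
    then have "card (E - D) \<le> 1" using card_mono[of "{V - {u}}"] by fastforce
    then show False using card_rest k3 by linarith
  next
    case False
    then have h4: "real (card V) \<ge> 4" using card_ge_3 by simp
    have card_V_u: "real (card (V - {u})) = real (card V) - 1"
      using fin u h4 by (simp add: of_nat_diff)
    have "real (card E) \<le> real (card (E - D)) + 1"
      using card_rest by (metis of_nat_1 of_nat_add of_nat_le_iff)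
    then have "(real (card E) - 2) / (real (card V) - 3) \<le> (real (card (E - D)) - 1) / (real (card V) - 3)"
      using h4 by (intro divide_right_mono) auto
    also have "\<dots> = d2 (V - {u}) (E - D)" unfolding d2_def card_V_u by simp
    also have "\<dots> < d2 V E"
    proof (rule d2_less_if_proper_subgraph[OF simple balanced rest])
      show "card (V - {u}) \<ge> 3" using card_V_u h4 by linarith
      show "(V - {u}, E - D) \<noteq> (V, E)" using u by auto
    qed
    finally have "card E + 1 < card V" using h4 unfolding d2_def by (simp add: field_simps)
    then show False using card_V_le_card_E by linarith
  qed
qed

lemma Union_edges_eq: "\<Union>E = V"
proof
  show "\<Union>E \<subseteq> V" using simple unfolding simple_graph_def by auto
  show "V \<subseteq> \<Union>E"
  proof
    fix u assume "u \<in> V"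
    then have "{e\<in>E. u \<in> e} \<noteq> {}"
      using degree_ge_2 by (metis card.empty not_numeral_le_zero)
    then show "u \<in> \<Union>E" by blast
  qed
qed

lemma vertex_deficit_less:
  assumes T: "T \<subseteq> E" "2 \<le> card T" "card T < card E"
  shows "real (card V - card (\<Union>T)) < real (card V - 2) * real (card E - card T) / real (card E - 1)"
proof -
  obtain e1 e2 where e: "e1 \<in> T" "e2 \<in> T" "e1 \<noteq> e2"
  proof -
    have "\<not> card T \<le> Suc 0" using T by simp
    then show ?thesis using that card_le_Suc0_iff_eq[of T] T(2) by fastforce
  qed
  have fin: "finite V" "finite (\<Union>T)" "\<Union>T \<subseteq> V"
    using simple T(1) unfolding simple_graph_def by (auto intro: finite_subset)
  have "card e1 = 2" "card e2 = 2" using e T(1) simple unfolding simple_graph_def by auto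
  then have "3 \<le> card (e1 \<union> e2)" using card_Un_of_card_2[OF _ _ e(3)] by simp
  also have "\<dots> \<le> card (\<Union>T)" using e fin by (intro card_mono) auto
  finally have w3: "3 \<le> card (\<Union>T)" .
  have "subgraph (\<Union>T) T V E" using fin T unfolding subgraph_def by auto
  moreover have "(\<Union>T, T) \<noteq> (V, E)" using T(3) by auto
  ultimately have "d2 (\<Union>T) T < d2 V E"
    using d2_less_if_proper_subgraph[OF simple balanced _ w3] by blast
  then have "(real (card T) - 1) / (real (card (\<Union>T)) - 2) < (real (card E) - 1) / (real (card V) - 2)"
    unfolding d2_def .
  moreover have "card (\<Union>T) \<le> card V" using card_mono[OF fin(1,3)] .
  ultimately have "(real (card V) - real (card (\<Union>T))) * (real (card E) - 1)
      < (real (card V) - 2) * (real (card E) - real (card T))"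
    using w3 card_ge_3 by (simp add: field_simps)
  then show ?thesis
    using w3 T(3) \<open>card (\<Union>T) \<le> card V\<close> card_ge_3
    by (simp add: of_nat_diff field_simps)
qed

end

definition embeddings :: "'a set \<Rightarrow> nat \<Rightarrow> ('a \<Rightarrow> nat) set" where
  "embeddings V n = {f \<in> V \<rightarrow>\<^sub>E {..<n}. inj_on f V}"

definition edge_image :: "'a set set \<Rightarrow> ('a \<Rightarrow> 'b) \<Rightarrow> 'b set set" where
  "edge_image E f = image f ` E"

lemma finite_embeddings: "finite V \<Longrightarrow> finite (embeddings V n)"
  unfolding embeddings_def by (rule finite_subset[of _ "V \<rightarrow>\<^sub>E {..<n}"]) (auto intro: finite_PiE)

lemma Union_edge_image: "\<Union>(edge_image E f) = f ` \<Union>E"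
  unfolding edge_image_def by auto

lemma inj_on_image_edges:
  assumes "simple_graph V E" "inj_on f V"
  shows "inj_on (image f) E"
  using assms inj_on_image_eq_iff unfolding simple_graph_def inj_on_def[of "image f"] by metis

lemma card_edge_image:
  assumes "simple_graph V E" "inj_on f V"
  shows "card (edge_image E f) = card E"
  unfolding edge_image_def by (rule card_image[OF inj_on_image_edges[OF assms]])

lemma copies_eq_edge_image_embeddings:
  assumes "simple_graph V E"
  shows "copies V E n = edge_image E ` embeddings V n"
proof
  show "copies V E n \<subseteq> edge_image E ` embeddings V n"
  proof
    fix c assume "c \<in> copies V E n"
    then obtain f where f: "c = image f ` E" "inj_on f V" "f ` V \<subseteq> {..<n}"
      unfolding copies_def by blast
    have "restrict f V \<in> embeddings V n"
      using f unfolding embeddings_def by (auto simp: inj_on_def)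
    moreover have "edge_image E (restrict f V) = c"
      using assms unfolding simple_graph_def edge_image_def f(1)
      by (auto intro!: image_cong simp: restrict_def)
    ultimately show "c \<in> edge_image E ` embeddings V n" by blast
  qed
  show "edge_image E ` embeddings V n \<subseteq> copies V E n"
    unfolding edge_image_def embeddings_def copies_def by (auto simp: PiE_iff)
qed

lemma card_copies_le_card_embeddings:
  assumes "simple_graph V E"
  shows "card {c \<in> copies V E n. P c} \<le> card {f \<in> embeddings V n. P (edge_image E f)}"
proof -
  have "{c \<in> copies V E n. P c} = edge_image E ` {f \<in> embeddings V n. P (edge_image E f)}"
    unfolding copies_eq_edge_image_embeddings[OF assms] by blast
  moreover have "finite {f \<in> embeddings V n. P (edge_image E f)}"
    by (rule finite_subset[OF _ finite_embeddings]) (use assms in \<open>auto simp: simple_graph_def\<close>)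
  ultimately show ?thesis by (simp add: card_image_le)
qed

section \<open>Regularity of the copy hypergraph\<close>

lemma card_inj_funcset_fix_point:
  assumes "a \<in> A" "x \<in> C"
  shows "card {f \<in> A \<rightarrow>\<^sub>E C. inj_on f A \<and> f a = x \<and> P f}
       = card {g \<in> (A - {a}) \<rightarrow>\<^sub>E (C - {x}). inj_on g (A - {a}) \<and> P (g(a := x))}"
proof (rule bij_betw_same_card[symmetric], rule bij_betw_byWitness[where f' = "\<lambda>f. f(a := undefined)"])
  show "\<forall>g\<in>{g \<in> (A - {a}) \<rightarrow>\<^sub>E (C - {x}). inj_on g (A - {a}) \<and> P (g(a := x))}.
      (g(a := x))(a := undefined) = g"
    by (auto simp: PiE_iff extensional_def fun_eq_iff)
  show "\<forall>f\<in>{f \<in> A \<rightarrow>\<^sub>E C. inj_on f A \<and> f a = x \<and> P f}. (f(a := undefined))(a := x) = f"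
    by auto
  show "(\<lambda>g. g(a := x)) ` {g \<in> (A - {a}) \<rightarrow>\<^sub>E (C - {x}). inj_on g (A - {a}) \<and> P (g(a := x))}
      \<subseteq> {f \<in> A \<rightarrow>\<^sub>E C. inj_on f A \<and> f a = x \<and> P f}"
  proof (rule image_subsetI)
    fix g assume "g \<in> {g \<in> (A - {a}) \<rightarrow>\<^sub>E (C - {x}). inj_on g (A - {a}) \<and> P (g(a := x))}"
    then have g: "g \<in> (A - {a}) \<rightarrow>\<^sub>E (C - {x})" "inj_on g (A - {a})" "P (g(a := x))" by auto
    have "g(a := x) \<in> A \<rightarrow>\<^sub>E C" using g(1) assms by (auto simp: PiE_iff extensional_def)
    have "inj_on (g(a := x)) (A - {a})" using g(2) by (simp add: inj_on_def)
    moreover have "x \<notin> (g(a := x)) ` (A - {a})" using g(1) by auto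
    ultimately have "inj_on (g(a := x)) A"
      using assms(1) by (metis Diff_idemp fun_upd_same inj_on_insert insert_Diff)
    then show "g(a := x) \<in> {f \<in> A \<rightarrow>\<^sub>E C. inj_on f A \<and> f a = x \<and> P f}"
      using \<open>g(a := x) \<in> A \<rightarrow>\<^sub>E C\<close> g(3) by simp
  qed
  show "(\<lambda>f. f(a := undefined)) ` {f \<in> A \<rightarrow>\<^sub>E C. inj_on f A \<and> f a = x \<and> P f}
      \<subseteq> {g \<in> (A - {a}) \<rightarrow>\<^sub>E (C - {x}). inj_on g (A - {a}) \<and> P (g(a := x))}"
    using assms by (auto simp: PiE_iff extensional_def inj_on_def)
qed

lemma card_embeddings_fix_two:
  assumes "finite V" "a \<in> V" "b \<in> V" "a \<noteq> b" "x < n" "y < n" "x \<noteq> y"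
  shows "card {f \<in> embeddings V n. f a = x \<and> f b = y} = falling (n - 2) (card V - 2)"
proof -
  let ?V' = "V - {a} - {b}" and ?N' = "{..<n} - {x} - {y}"
  have "card {f \<in> embeddings V n. f a = x \<and> f b = y}
      = card {f \<in> V \<rightarrow>\<^sub>E {..<n}. inj_on f V \<and> f a = x \<and> f b = y}"
    unfolding embeddings_def by (rule arg_cong[where f = card]) auto
  also have "\<dots> = card {g \<in> (V - {a}) \<rightarrow>\<^sub>E ({..<n} - {x}). inj_on g (V - {a}) \<and> g b = y \<and> True}"
    using card_inj_funcset_fix_point[of a V x "{..<n}" "\<lambda>f. f b = y"] assms by simp
  also have "\<dots> = card {g \<in> ?V' \<rightarrow>\<^sub>E ?N'. inj_on g ?V' \<and> True}"
    by (rule card_inj_funcset_fix_point) (use assms in auto)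
  also have "\<dots> = card ?N' ^ (card ?V' - card ?V') * prod ((-) (card ?N')) {0..<card ?V'}"
    using card_inj_on_subset_funcset[of ?V' ?N' ?V'] assms(1) by simp
  also have "\<dots> = falling (n - 2) (card V - 2)"
    using assms by (simp add: falling_def atLeast0LessThan card_Diff_singleton_if numeral_2_eq_2)
  finally show ?thesis .
qed

lemma card_embeddings_edge_onto:
  assumes "simple_graph V E" "e \<in> E" "v \<in> Kedges n"
  shows "card {f \<in> embeddings V n. f ` e = v} = 2 * falling (n - 2) (card V - 2)"
proof -
  have "card e = 2" "e \<subseteq> V" "card v = 2" "v \<subseteq> {..<n}"
    using assms unfolding simple_graph_def Kedges_def by auto
  then obtain a b x y where ab: "e = {a, b}" "a \<noteq> b" "a \<in> V" "b \<in> V"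
    and xy: "v = {x, y}" "x \<noteq> y" "x < n" "y < n"
    by (auto simp: card_2_iff)
  let ?F = "\<lambda>x y. {f \<in> embeddings V n. f a = x \<and> f b = y}"
  have fin: "finite V" using assms(1) unfolding simple_graph_def by simp
  have "{f \<in> embeddings V n. f ` e = v} = ?F x y \<union> ?F y x"
    unfolding ab xy by (auto simp: doubleton_eq_iff)
  moreover have "?F x y \<inter> ?F y x = {}" using xy(2) by blast
  moreover have "finite (?F x y)" "finite (?F y x)" using finite_embeddings[OF fin] by auto
  ultimately have "card {f \<in> embeddings V n. f ` e = v} = card (?F x y) + card (?F y x)"
    by (simp add: card_Un_disjoint)
  then show ?thesis using card_embeddings_fix_two[OF fin] ab xy by simp
qed

lemma restrict_comp_Aut_in_fiber:
  assumes "simple_graph V E" "\<sigma> \<in> Aut V E" "f \<in> embeddings V n"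
  shows "restrict (f \<circ> \<sigma>) V \<in> embeddings V n"
    and "edge_image E (restrict (f \<circ> \<sigma>) V) = edge_image E f"
proof -
  have \<sigma>: "\<sigma> permutes V" "image \<sigma> ` E = E" using assms(2) unfolding Aut_def by auto
  have f: "f \<in> V \<rightarrow>\<^sub>E {..<n}" "inj_on f V" using assms(3) unfolding embeddings_def by auto
  show "restrict (f \<circ> \<sigma>) V \<in> embeddings V n"
    using \<sigma>(1) f permutes_inj_on[OF \<sigma>(1)] unfolding embeddings_def
    by (auto simp: permutes_in_image inj_on_def PiE_iff)
  have "image (restrict (f \<circ> \<sigma>) V) e = image f (image \<sigma> e)" if "e \<in> E" for e
    using that assms(1) unfolding simple_graph_def by (auto simp: restrict_def)
  then have "edge_image E (restrict (f \<circ> \<sigma>) V) = image f ` image \<sigma> ` E"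
    unfolding edge_image_def image_image by (auto intro!: image_cong)
  then show "edge_image E (restrict (f \<circ> \<sigma>) V) = edge_image E f"
    unfolding \<sigma>(2) edge_image_def .
qed

lemma fiber_transition_in_Aut:
  assumes "simple_graph V E" "\<Union>E = V" "f \<in> embeddings V n" "g \<in> embeddings V n"
    and same: "edge_image E g = edge_image E f"
  shows "(\<lambda>x. if x \<in> V then inv_into V f (g x) else x) \<in> Aut V E"
proof -
  define \<sigma> where "\<sigma> = (\<lambda>x. if x \<in> V then inv_into V f (g x) else x)"
  have f: "inj_on f V" and g: "inj_on g V" using assms(3,4) unfolding embeddings_def by auto
  have eV: "\<And>e. e \<in> E \<Longrightarrow> e \<subseteq> V" using assms(1) unfolding simple_graph_def by auto
  have "g ` V = f ` V" using same Union_edge_image[of E] assms(2) by metis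
  then have "bij_betw g V (f ` V)" using g unfolding bij_betw_def by blast
  then have "bij_betw (inv_into V f \<circ> g) V V"
    using bij_betw_trans bij_betw_inv_into f inj_on_imp_bij_betw by blast
  then have "bij_betw \<sigma> V V" unfolding \<sigma>_def by (rule bij_betw_cong[THEN iffD1, rotated]) auto
  moreover have "{x. \<sigma> x \<noteq> x} \<subseteq> V" unfolding \<sigma>_def by auto
  ultimately have perm: "\<sigma> permutes V" by (simp add: permutes_altdef)
  have \<sigma>_e: "\<sigma> ` e = inv_into V f ` g ` e" if "e \<in> E" for e
    using eV[OF that] unfolding \<sigma>_def by auto
  have "image \<sigma> ` E = E"
  proof
    show "image \<sigma> ` E \<subseteq> E"
    proof
      fix q assume "q \<in> image \<sigma> ` E"
      then obtain e where e: "e \<in> E" "q = \<sigma> ` e" by blast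
      then obtain e' where e': "e' \<in> E" "g ` e = f ` e'"
        using same unfolding edge_image_def by blast
      have "q = e'" using e e' \<sigma>_e eV f by simp
      then show "q \<in> E" using e' by simp
    qed
    show "E \<subseteq> image \<sigma> ` E"
    proof
      fix e' assume e': "e' \<in> E"
      then obtain e where e: "e \<in> E" "f ` e' = g ` e"
        using same unfolding edge_image_def by blast
      have "\<sigma> ` e = e'"
        using \<sigma>_e[OF e(1)] e(2) inv_into_image_cancel[OF f eV[OF e']] by simp
      then show "e' \<in> image \<sigma> ` E" using e(1) by blast
    qed
  qed
  then show ?thesis using perm unfolding Aut_def \<sigma>_def by blast
qed

lemma card_fiber_edge_image:
  assumes "simple_graph V E" "\<Union>E = V" "f \<in> embeddings V n"
  shows "card {g \<in> embeddings V n. edge_image E g = edge_image E f} = card (Aut V E)"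
proof -
  let ?fiber = "{g \<in> embeddings V n. edge_image E g = edge_image E f}"
  have f: "inj_on f V" using assms(3) unfolding embeddings_def by auto
  have "bij_betw (\<lambda>\<sigma>. restrict (f \<circ> \<sigma>) V) (Aut V E) ?fiber"
  proof (rule bij_betw_byWitness[where f' = "\<lambda>g x. if x \<in> V then inv_into V f (g x) else x"])
    show "\<forall>\<sigma>\<in>Aut V E. (\<lambda>x. if x \<in> V then inv_into V f (restrict (f \<circ> \<sigma>) V x) else x) = \<sigma>"
      using f by (auto simp: Aut_def permutes_in_image permutes_not_in fun_eq_iff)
    show "\<forall>g\<in>?fiber. restrict (f \<circ> (\<lambda>x. if x \<in> V then inv_into V f (g x) else x)) V = g"
    proof
      fix g assume g: "g \<in> ?fiber"
      then have "g ` V = f ` V" using Union_edge_image[of E] assms(2) by (metis (mono_tags) mem_Collect_eq)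
      moreover have "g \<in> extensional V" using g unfolding embeddings_def by (auto simp: PiE_iff)
      ultimately show "restrict (f \<circ> (\<lambda>x. if x \<in> V then inv_into V f (g x) else x)) V = g"
        by (auto simp: fun_eq_iff extensional_def) (metis f_inv_into_f imageI)
    qed
    show "(\<lambda>\<sigma>. restrict (f \<circ> \<sigma>) V) ` Aut V E \<subseteq> ?fiber"
      using restrict_comp_Aut_in_fiber[OF assms(1) _ assms(3)] by blast
    show "(\<lambda>g x. if x \<in> V then inv_into V f (g x) else x) ` ?fiber \<subseteq> Aut V E"
      using fiber_transition_in_Aut[OF assms(1,2,3)] by blast
  qed
  then show ?thesis by (simp add: bij_betw_same_card)
qed

lemma card_embeddings_covering_edge:
  assumes "simple_graph V E" "v \<in> Kedges n"
  shows "card {f \<in> embeddings V n. v \<in> edge_image E f} = card E * (2 * falling (n - 2) (card V - 2))"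
proof -
  have fin: "finite V" "finite E" using assms(1) simple_graph_finite_edges simple_graph_def by auto
  have "{f \<in> embeddings V n. v \<in> edge_image E f} = (\<Union>e\<in>E. {f \<in> embeddings V n. f ` e = v})"
    unfolding edge_image_def by blast
  also have "card \<dots> = (\<Sum>e\<in>E. card {f \<in> embeddings V n. f ` e = v})"
  proof (rule card_UN_disjoint)
    show "\<forall>e\<in>E. \<forall>e'\<in>E. e \<noteq> e' \<longrightarrow>
        {f \<in> embeddings V n. f ` e = v} \<inter> {f \<in> embeddings V n. f ` e' = v} = {}"
      using inj_on_image_edges[OF assms(1)] unfolding embeddings_def inj_on_def by blast
  qed (use fin finite_embeddings[OF fin(1), of n] in auto)
  finally show ?thesis using card_embeddings_edge_onto[OF assms(1) _ assms(2)] by simp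
qed

lemma card_embeddings_covering_edge_eq_degree:
  assumes "simple_graph V E" "\<Union>E = V"
  shows "card {f \<in> embeddings V n. v \<in> edge_image E f} = degree (copies V E n) v * card (Aut V E)"
proof -
  let ?C = "{c \<in> copies V E n. v \<in> c}"
  have fin: "finite (embeddings V n)" using assms(1) finite_embeddings simple_graph_def by auto
  have copies: "copies V E n = edge_image E ` embeddings V n"
    by (rule copies_eq_edge_image_embeddings[OF assms(1)])
  have "{f \<in> embeddings V n. v \<in> edge_image E f} = (\<Union>c\<in>?C. {g \<in> embeddings V n. edge_image E g = c})"
    unfolding copies by blast
  also have "card \<dots> = (\<Sum>c\<in>?C. card {g \<in> embeddings V n. edge_image E g = c})"
    by (rule card_UN_disjoint) (use fin in \<open>auto simp: copies\<close>)
  also have "\<dots> = (\<Sum>c\<in>?C. card (Aut V E))"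
  proof (rule sum.cong[OF refl])
    fix c assume "c \<in> ?C"
    then obtain f where "f \<in> embeddings V n" "c = edge_image E f" unfolding copies by blast
    then show "card {g \<in> embeddings V n. edge_image E g = c} = card (Aut V E)"
      using card_fiber_edge_image[OF assms] by simp
  qed
  finally show ?thesis unfolding degree_def by simp
qed

lemma card_Aut_pos:
  assumes "finite V"
  shows "card (Aut V E) > 0"
proof -
  have "finite (Aut V E)"
    unfolding Aut_def by (rule finite_subset[OF _ finite_permutations[OF assms]]) auto
  moreover have "id \<in> Aut V E" unfolding Aut_def by (simp add: permutes_id)
  ultimately show ?thesis by (metis card_gt_0_iff empty_iff)
qed

lemma degree_copies:
  assumes "simple_graph V E" "\<Union>E = V" "v \<in> Kedges n"
  shows "real (degree (copies V E n) v)
    = 2 * real (card E) * real (falling (n - 2) (card V - 2)) / real (card (Aut V E))"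
proof -
  have "card (Aut V E) > 0" using assms(1) card_Aut_pos unfolding simple_graph_def by blast
  moreover have "degree (copies V E n) v * card (Aut V E) = card E * (2 * falling (n - 2) (card V - 2))"
    using card_embeddings_covering_edge[OF assms(1,3)] card_embeddings_covering_edge_eq_degree[OF assms(1,2)]
    by simp
  then have "real (degree (copies V E n) v) * real (card (Aut V E))
      = 2 * real (card E) * real (falling (n - 2) (card V - 2))"
    by (metis (mono_tags) of_nat_mult of_nat_numeral mult.left_commute mult.assoc)
  ultimately show ?thesis by (simp add: field_simps)
qed

section \<open>Counting maps with constrained images\<close>

lemma card_funcset_image_subset_le:
  fixes n :: nat
  assumes "finite V" "W \<subseteq> V" "finite U"
  shows "card {f \<in> V \<rightarrow>\<^sub>E {..<n}. f ` W \<subseteq> U} \<le> card U ^ card W * n ^ (card V - card W)"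
proof -
  let ?B = "\<Pi>\<^sub>E z\<in>V. if z \<in> W then U else {..<n}"
  have "{f \<in> V \<rightarrow>\<^sub>E {..<n}. f ` W \<subseteq> U} \<subseteq> ?B"
    using assms(2) by (auto simp: PiE_iff extensional_def image_subset_iff)
  moreover have "finite ?B" using assms by (auto intro!: finite_PiE)
  ultimately have "card {f \<in> V \<rightarrow>\<^sub>E {..<n}. f ` W \<subseteq> U} \<le> card ?B" by (rule card_mono[rotated])
  also have "card ?B = (\<Prod>z\<in>V. if z \<in> W then card U else n)"
    using assms(1) by (simp add: card_PiE) (rule prod.cong, auto)
  also have "\<dots> = (\<Prod>z\<in>W. card U) * (\<Prod>z\<in>V - W. n)"
    using prod.If_cases[OF assms(1), of "\<lambda>z. z \<in> W" "\<lambda>_. card U" "\<lambda>_. n"] assms(2)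
    by (simp add: Int_absorb1 Diff_eq)
  also have "\<dots> = card U ^ card W * n ^ (card V - card W)"
    using assms by (simp add: card_Diff_subset finite_subset)
  finally show ?thesis .
qed

lemma card_funcset_some_image_subset_le:
  fixes n :: nat
  assumes "finite V" "finite \<W>" "\<And>W. W \<in> \<W> \<Longrightarrow> W \<subseteq> V" "finite U" "card U \<le> u"
    and "\<And>f. f \<in> X \<Longrightarrow> f \<in> V \<rightarrow>\<^sub>E {..<n} \<and> (\<exists>W\<in>\<W>. f ` W \<subseteq> U)"
  shows "card X \<le> (\<Sum>W\<in>\<W>. u ^ card W * n ^ (card V - card W))"
proof -
  have "X \<subseteq> (\<Union>W\<in>\<W>. {f \<in> V \<rightarrow>\<^sub>E {..<n}. f ` W \<subseteq> U})"
  proof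
    fix f assume "f \<in> X"
    with assms(6) obtain W where "W \<in> \<W>" "f \<in> V \<rightarrow>\<^sub>E {..<n}" "f ` W \<subseteq> U" by blast
    then show "f \<in> (\<Union>W\<in>\<W>. {f \<in> V \<rightarrow>\<^sub>E {..<n}. f ` W \<subseteq> U})" by blast
  qed
  moreover have "finite (\<Union>W\<in>\<W>. {f \<in> V \<rightarrow>\<^sub>E {..<n}. f ` W \<subseteq> U})"
    using assms(1,2) by (auto intro: finite_subset[OF _ finite_PiE[of V "\<lambda>_. {..<n}"]])
  ultimately have "card X \<le> card (\<Union>W\<in>\<W>. {f \<in> V \<rightarrow>\<^sub>E {..<n}. f ` W \<subseteq> U})"
    by (rule card_mono[rotated])
  also have "\<dots> \<le> (\<Sum>W\<in>\<W>. card {f \<in> V \<rightarrow>\<^sub>E {..<n}. f ` W \<subseteq> U})"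
    by (rule card_UN_le[OF assms(2)])
  also have "\<dots> \<le> (\<Sum>W\<in>\<W>. u ^ card W * n ^ (card V - card W))"
  proof (rule sum_mono)
    fix W assume "W \<in> \<W>"
    then have "card {f \<in> V \<rightarrow>\<^sub>E {..<n}. f ` W \<subseteq> U} \<le> card U ^ card W * n ^ (card V - card W)"
      using card_funcset_image_subset_le[OF assms(1) assms(3) assms(4)] by blast
    also have "\<dots> \<le> u ^ card W * n ^ (card V - card W)"
      using assms(5) by (intro mult_right_mono power_mono) auto
    finally show "card {f \<in> V \<rightarrow>\<^sub>E {..<n}. f ` W \<subseteq> U} \<le> u ^ card W * n ^ (card V - card W)" .
  qed
  finally show ?thesis .
qed

lemma finite_Kedges: "finite (Kedges n)"
  unfolding Kedges_def by (rule finite_subset[of _ "Pow {..<n}"]) auto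

lemma card_Kedges_ge: "n - 1 \<le> card (Kedges n)"
proof -
  have "(\<lambda>i. {0, Suc i}) ` {..<n - 1} \<subseteq> Kedges n" unfolding Kedges_def by auto
  moreover have "inj_on (\<lambda>i. {0, Suc i}) {..<n - 1}" by (auto simp: inj_on_def doubleton_eq_iff)
  ultimately show ?thesis using card_mono[OF finite_Kedges] card_image by (metis card_lessThan)
qed

lemma max_codegree_le:
  assumes "finite Vt" "l \<le> card Vt" "\<And>S. S \<subseteq> Vt \<Longrightarrow> card S = l \<Longrightarrow> card {e\<in>Es. S \<subseteq> e} \<le> B"
  shows "max_codegree Vt Es l \<le> B"
  unfolding max_codegree_def
proof (rule Max.boundedI)
  have "{card {e\<in>Es. S \<subseteq> e} | S. S \<subseteq> Vt \<and> card S = l} \<subseteq> (\<lambda>S. card {e\<in>Es. S \<subseteq> e}) ` Pow Vt"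
    by blast
  then show "finite {card {e\<in>Es. S \<subseteq> e} | S. S \<subseteq> Vt \<and> card S = l}"
    by (rule finite_surj[rotated]) (use assms(1) in simp)
  obtain S where "S \<subseteq> Vt" "card S = l" using obtain_subset_with_card_n[OF assms(2)] by blast
  then show "{card {e\<in>Es. S \<subseteq> e} | S. S \<subseteq> Vt \<and> card S = l} \<noteq> {}" by blast
qed (use assms(3) in blast)

lemma Gamma_le:
  assumes "finite Vt" "2 \<le> card Vt"
    and "\<And>v v'. v \<in> Vt \<Longrightarrow> v' \<in> Vt \<Longrightarrow> v \<noteq> v' \<Longrightarrow>
      card {S. S \<subseteq> Vt \<and> card S = k - 1 \<and> insert v S \<in> Es \<and> insert v' S \<in> Es} \<le> B"
  shows "Gamma Vt Es k \<le> B"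
  unfolding Gamma_def
proof (rule Max.boundedI)
  let ?c = "\<lambda>v v'. card {S. S \<subseteq> Vt \<and> card S = k - 1 \<and> insert v S \<in> Es \<and> insert v' S \<in> Es}"
  have "{?c v v' | v v'. v \<in> Vt \<and> v' \<in> Vt \<and> v \<noteq> v'} \<subseteq> (\<lambda>(v, v'). ?c v v') ` (Vt \<times> Vt)"
    by auto
  then show "finite {?c v v' | v v'. v \<in> Vt \<and> v' \<in> Vt \<and> v \<noteq> v'}"
    by (rule finite_surj[rotated]) (use assms(1) in simp)
  obtain v v' where "v \<in> Vt" "v' \<in> Vt" "v \<noteq> v'"
    using assms(1,2) card_le_Suc0_iff_eq[of Vt] by fastforce
  then show "{?c v v' | v v'. v \<in> Vt \<and> v' \<in> Vt \<and> v \<noteq> v'} \<noteq> {}" by blast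
qed (use assms(3) in blast)

section \<open>Asymptotics\<close>

lemma pow_bigo_falling: "(\<lambda>n. real n ^ j) \<in> O(\<lambda>n. real (falling (n - c) j))"
proof (rule bigoI[where c = "2 ^ j"])
  show "\<forall>\<^sub>F n in sequentially. norm (real n ^ j) \<le> 2 ^ j * norm (real (falling (n - c) j))"
  proof (rule eventually_sequentiallyI[of "2 * (c + j)"])
    fix n :: nat assume n: "2 * (c + j) \<le> n"
    have "(real n / 2) ^ j = (\<Prod>i<j. real n / 2)" by simp
    also have "\<dots> \<le> (\<Prod>i<j. real (n - c - i))"
      using n by (intro prod_mono) (auto simp: of_nat_diff)
    also have "\<dots> = real (falling (n - c) j)" unfolding falling_def by simp
    finally show "norm (real n ^ j) \<le> 2 ^ j * norm (real (falling (n - c) j))"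
      by (simp add: power_divide field_simps)
  qed
qed

lemma pow_smallo_powr_of_pow_bigo:
  fixes D :: "nat \<Rightarrow> real"
  assumes D: "(\<lambda>n. real n ^ a) \<in> O(D)" "\<forall>\<^sub>F n in sequentially. 0 \<le> D n"
    and p: "p > 0" and b: "real b < real a * p"
  shows "(\<lambda>n. real n ^ b) \<in> o(\<lambda>n. D n powr p)"
proof -
  have pos: "\<forall>\<^sub>F n in sequentially. n > 0" by (rule eventually_gt_at_top)
  have "(\<lambda>n. real n ^ b) \<in> \<Theta>(\<lambda>n. real n powr real b)"
    by (intro bigthetaI_cong eventually_mono[OF pos]) (simp add: powr_realpow)
  also have "(\<lambda>n. real n powr real b) \<in> o(\<lambda>n. real n powr (real a * p))"
    using powr_smallo_iff[OF filterlim_real_sequentially] b by simp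
  also have "(\<lambda>n. real n powr (real a * p)) \<in> \<Theta>(\<lambda>n. (real n ^ a) powr p)"
    by (intro bigthetaI_cong eventually_mono[OF pos]) (simp add: powr_powr powr_realpow [symmetric])
  also have "(\<lambda>n. (real n ^ a) powr p) \<in> O(\<lambda>n. D n powr p)"
    using p by (intro bigo_powr_nonneg[OF D(1) _ _ D(2)]) auto
  finally show ?thesis .
qed

lemma sum_pow_smallo_powr:
  fixes D :: "nat \<Rightarrow> real"
  assumes D: "(\<lambda>n. real n ^ a) \<in> O(D)" "\<forall>\<^sub>F n in sequentially. 0 \<le> D n" and p: "p > 0"
    and d: "\<And>W. W \<in> \<W> \<Longrightarrow> real (d W) < real a * p"
  shows "(\<lambda>n. real (\<Sum>W\<in>\<W>. c W * n ^ d W)) \<in> o(\<lambda>n. D n powr p)"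
proof -
  have "(\<lambda>n. real (c W) * real n ^ d W) \<in> o(\<lambda>n. D n powr p)" if "W \<in> \<W>" for W
    using pow_smallo_powr_of_pow_bigo[OF D p d[OF that]] by (cases "c W = 0") simp_all
  then show ?thesis unfolding of_nat_sum of_nat_mult of_nat_power by (rule big_sum_in_smallo)
qed

lemma bigo_of_nat_eventually_le:
  assumes "\<forall>\<^sub>F n in F. f n \<le> g n"
  shows "(\<lambda>n. real (f n)) \<in> O[F](\<lambda>n. real (g n))"
  using assms by (intro bigoI[where c = 1]) (auto elim!: eventually_mono)

section \<open>Codegrees and \<Gamma> of the copy hypergraph\<close>

context strictly_2_balanced_graph
begin

text \<open>
  The vertex sets of l-sets of edges of H lie here (vertex_deficit_less), and the defining
  inequality is what makes n^(card V - card W) = o(copy_degree n powr ((k-l)/(k-1))).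
\<close>
definition small_deficit_sets :: "nat \<Rightarrow> 'a set set" where
  "small_deficit_sets l = {W. W \<subseteq> V \<and>
     real (card V - card W) < real (card V - 2) * real (card E - l) / real (card E - 1)}"

lemma finite_small_deficit_sets: "finite (small_deficit_sets l)"
  using simple unfolding small_deficit_sets_def simple_graph_def
  by (auto intro: finite_subset[of _ "Pow V"])

lemma codegree_copies_le:
  assumes S: "S \<subseteq> Kedges n" "card S = l" and l: "2 \<le> l" "l < card E"
  shows "card {c \<in> copies V E n. S \<subseteq> c}
    \<le> (\<Sum>W\<in>small_deficit_sets l. (2 * l) ^ card W * n ^ (card V - card W))"
proof -
  have fin: "finite V" "finite (\<Union>S)" using simple S(1) unfolding simple_graph_def Kedges_def
    by (auto intro: finite_subset[of _ "{..<n}"])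
  have "card (\<Union>S) \<le> sum card S" by (rule card_Union_le_sum_card)
  also have "sum card S = 2 * l" using S unfolding Kedges_def by (simp add: subset_iff)
  finally have card_US: "card (\<Union>S) \<le> 2 * l" .
  have "card {c \<in> copies V E n. S \<subseteq> c} \<le> card {f \<in> embeddings V n. S \<subseteq> edge_image E f}"
    by (rule card_copies_le_card_embeddings[OF simple])
  also have "\<dots> \<le> (\<Sum>W\<in>small_deficit_sets l. (2 * l) ^ card W * n ^ (card V - card W))"
  proof (rule card_funcset_some_image_subset_le[OF fin(1) finite_small_deficit_sets _ fin(2) card_US])
    show "W \<subseteq> V" if "W \<in> small_deficit_sets l" for W
      using that unfolding small_deficit_sets_def by blast
    fix f assume "f \<in> {f \<in> embeddings V n. S \<subseteq> edge_image E f}"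
    then have f: "f \<in> V \<rightarrow>\<^sub>E {..<n}" "inj_on f V" "S \<subseteq> edge_image E f"
      unfolding embeddings_def by auto
    define T where "T = {e\<in>E. f ` e \<in> S}"
    have "image f ` T = S" using f(3) unfolding T_def edge_image_def by blast
    moreover have "inj_on (image f) T"
      using inj_on_image_edges[OF simple f(2)] unfolding T_def by (rule inj_on_subset) auto
    ultimately have "card T = l" using S(2) card_image by fastforce
    moreover have "T \<subseteq> E" unfolding T_def by blast
    ultimately have "real (card V - card (\<Union>T)) < real (card V - 2) * real (card E - l) / real (card E - 1)"
      using vertex_deficit_less[of T] l by metis
    moreover have "\<Union>T \<subseteq> V" using \<open>T \<subseteq> E\<close> simple unfolding simple_graph_def by blast
    ultimately have "\<Union>T \<in> small_deficit_sets l" unfolding small_deficit_sets_def by blast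
    moreover have "f ` \<Union>T \<subseteq> \<Union>S" unfolding T_def by blast
    ultimately show "f \<in> V \<rightarrow>\<^sub>E {..<n} \<and> (\<exists>W\<in>small_deficit_sets l. f ` W \<subseteq> \<Union>S)"
      using f(1) by blast
  qed
  finally show ?thesis .
qed

lemma edge_covered_by_other_edges:
  assumes g: "inj_on g V" and v: "v \<in> edge_image E g"
  shows "v \<subseteq> \<Union>(edge_image E g - {v})"
proof
  fix x assume "x \<in> v"
  then obtain e y where e: "e \<in> E" "y \<in> e" "x = g y" using v unfolding edge_image_def by blast
  then have "y \<in> V" using simple unfolding simple_graph_def by blast
  then have "\<not> card {e\<in>E. y \<in> e} \<le> Suc 0" using degree_ge_2 by fastforce
  then obtain e1 e2 where e12: "e1 \<in> E" "e2 \<in> E" "y \<in> e1" "y \<in> e2" "e1 \<noteq> e2"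
    using card_le_Suc0_iff_eq[of "{e\<in>E. y \<in> e}"] simple_graph_finite_edges[OF simple] by auto
  then have "g ` e1 \<noteq> g ` e2" using inj_on_image_edges[OF simple g] unfolding inj_on_def by blast
  then have "g ` e1 \<in> edge_image E g - {v} \<or> g ` e2 \<in> edge_image E g - {v}"
    using e12 unfolding edge_image_def by blast
  then show "x \<in> \<Union>(edge_image E g - {v})" using e12 e(3) by blast
qed

text \<open>
  Since every vertex of H has degree 2, v' is covered by the other edges of the copy S + v', hence
  by S; so S + v is a copy through v that meets v' outside v.
\<close>
lemma card_copies_through_two_edges_le:
  assumes v: "v \<in> Kedges n" "v' \<in> Kedges n" "v \<noteq> v'"
  shows "card {S. S \<subseteq> Kedges n \<and> card S = card E - 1 \<and> insert v S \<in> copies V E n \<and> insert v' S \<in> copies V E n}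
    \<le> (\<Sum>W\<in>{W. W \<subseteq> V \<and> card W = 3}. 4 ^ card W * n ^ (card V - card W))"
proof -
  let ?\<S> = "{S. S \<subseteq> Kedges n \<and> card S = card E - 1 \<and> insert v S \<in> copies V E n \<and> insert v' S \<in> copies V E n}"
  have fin: "finite V" using simple unfolding simple_graph_def by simp
  have copies: "copies V E n = edge_image E ` embeddings V n"
    by (rule copies_eq_edge_image_embeddings[OF simple])
  have card_copy: "card c = card E" if "c \<in> copies V E n" for c
    using that card_edge_image[OF simple] unfolding copies embeddings_def by auto
  have "card ?\<S> \<le> card {c \<in> copies V E n. v \<in> c \<and> v' \<subseteq> \<Union>c}"
  proof (rule card_inj_on_le)
    have v_notin: "v \<notin> S" if "S \<in> ?\<S>" for S
    proof
      assume "v \<in> S"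
      then have "insert v S = S" by (rule insert_absorb)
      moreover from that have "card S = card E - 1" "insert v S \<in> copies V E n" by auto
      ultimately have "card E = card E - 1" using card_copy by metis
      then show False using card_ge_3 by simp
    qed
    show "inj_on (insert v) ?\<S>"
    proof (rule inj_onI)
      fix S S' assume S: "S \<in> ?\<S>" "S' \<in> ?\<S>" and eq: "insert v S = insert v S'"
      have "S = insert v S - {v}" using v_notin[OF S(1)] by simp
      also have "\<dots> = S'" using v_notin[OF S(2)] eq by simp
      finally show "S = S'" .
    qed
    show "insert v ` ?\<S> \<subseteq> {c \<in> copies V E n. v \<in> c \<and> v' \<subseteq> \<Union>c}"
    proof (rule image_subsetI)
      fix S assume "S \<in> ?\<S>"
      then have S: "insert v S \<in> copies V E n" "insert v' S \<in> copies V E n" by auto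
      then obtain g where "g \<in> embeddings V n" "edge_image E g = insert v' S" unfolding copies by auto
      then have "v' \<subseteq> \<Union>(insert v' S - {v'})"
        using edge_covered_by_other_edges[of g v'] unfolding embeddings_def by auto
      then show "insert v S \<in> {c \<in> copies V E n. v \<in> c \<and> v' \<subseteq> \<Union>c}"
        using S(1) by blast
    qed
    show "finite {c \<in> copies V E n. v \<in> c \<and> v' \<subseteq> \<Union>c}"
      using finite_embeddings[OF fin] unfolding copies by simp
  qed
  also have "\<dots> \<le> card {f \<in> embeddings V n. v \<in> edge_image E f \<and> v' \<subseteq> \<Union>(edge_image E f)}"
    by (rule card_copies_le_card_embeddings[OF simple])
  also have "\<dots> \<le> (\<Sum>W\<in>{W. W \<subseteq> V \<and> card W = 3}. 4 ^ card W * n ^ (card V - card W))"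
  proof (rule card_funcset_some_image_subset_le[where U = "v \<union> v'"])
    have card_v: "card v = 2" "card v' = 2" using v unfolding Kedges_def by auto
    then show "finite (v \<union> v')" by (auto intro: card_ge_0_finite)
    show "card (v \<union> v') \<le> 4" using card_Un_le[of v v'] card_v by simp
    show "finite {W. W \<subseteq> V \<and> card W = 3}" using fin by (auto intro: finite_subset[of _ "Pow V"])
    fix f assume "f \<in> {f \<in> embeddings V n. v \<in> edge_image E f \<and> v' \<subseteq> \<Union>(edge_image E f)}"
    then have f: "f \<in> V \<rightarrow>\<^sub>E {..<n}" "v \<in> edge_image E f" "v' \<subseteq> f ` \<Union>E"
      unfolding embeddings_def by (auto simp: Union_edge_image)
    obtain e where e: "e \<in> E" "v = f ` e" using f(2) unfolding edge_image_def by blast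
    have "finite v" using card_v by (auto intro: card_ge_0_finite)
    then have "\<not> v' \<subseteq> v" using card_subset_eq[of v v'] card_v v(3) by auto
    then obtain y where y: "y \<in> \<Union>E" "f y \<in> v'" "y \<notin> e" using f(3) e(2) by blast
    have "e \<subseteq> V" "card e = 2" "y \<in> V" using e(1) y(1) simple unfolding simple_graph_def by auto
    moreover have "finite e" using \<open>card e = 2\<close> by (auto intro: card_ge_0_finite)
    ultimately have "insert y e \<in> {W. W \<subseteq> V \<and> card W = 3}" using y(3) by simp
    moreover have "f ` insert y e \<subseteq> v \<union> v'" using y(2) e(2) by blast
    ultimately show "f \<in> V \<rightarrow>\<^sub>E {..<n} \<and> (\<exists>W\<in>{W. W \<subseteq> V \<and> card W = 3}. f ` W \<subseteq> v \<union> v')"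
      using f(1) by blast
  qed (use fin in auto)
  finally show ?thesis .
qed

definition copy_degree :: "nat \<Rightarrow> real" where
  "copy_degree n = 2 * real (card E) * real (falling (n - 2) (card V - 2)) / real (card (Aut V E))"

lemma copy_degree_nonneg: "0 \<le> copy_degree n"
  unfolding copy_degree_def by simp

lemma pow_bigo_copy_degree: "(\<lambda>n. real n ^ (card V - 2)) \<in> O(copy_degree)"
proof -
  have "card (Aut V E) > 0" using simple card_Aut_pos unfolding simple_graph_def by blast
  then have "2 * real (card E) / real (card (Aut V E)) \<noteq> 0" using card_ge_3 by simp
  then have "O(copy_degree) = O(\<lambda>n. real (falling (n - 2) (card V - 2)))"
    unfolding copy_degree_def times_divide_eq_left[symmetric] by simp
  then show ?thesis using pow_bigo_falling by simp
qed

lemma max_codegree_smallo: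
  assumes l: "2 \<le> l" "l < card E"
  shows "(\<lambda>n. real (max_codegree (Kedges n) (copies V E n) l))
    \<in> o(\<lambda>n. copy_degree n powr (real (card E - l) / real (card E - 1)))"
proof -
  let ?B = "\<lambda>n. \<Sum>W\<in>small_deficit_sets l. (2 * l) ^ card W * n ^ (card V - card W)"
  have "\<forall>\<^sub>F n in sequentially. max_codegree (Kedges n) (copies V E n) l \<le> ?B n"
  proof (rule eventually_sequentiallyI[of "l + 1"])
    fix n assume "l + 1 \<le> n"
    then have "l \<le> card (Kedges n)" using card_Kedges_ge[of n] by linarith
    then show "max_codegree (Kedges n) (copies V E n) l \<le> ?B n"
      by (rule max_codegree_le[OF finite_Kedges _ codegree_copies_le[OF _ _ l]])
  qed
  then have "(\<lambda>n. real (max_codegree (Kedges n) (copies V E n) l)) \<in> O(\<lambda>n. real (?B n))"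
    by (rule bigo_of_nat_eventually_le)
  also have "(\<lambda>n. real (?B n)) \<in> o(\<lambda>n. copy_degree n powr (real (card E - l) / real (card E - 1)))"
  proof (rule sum_pow_smallo_powr[OF pow_bigo_copy_degree])
    show "real (card E - l) / real (card E - 1) > 0" using l by simp
    show "real (card V - card W) < real (card V - 2) * (real (card E - l) / real (card E - 1))"
      if "W \<in> small_deficit_sets l" for W
      using that unfolding small_deficit_sets_def by simp
  qed (simp add: copy_degree_nonneg)
  finally show ?thesis .
qed

lemma Gamma_smallo: "(\<lambda>n. real (Gamma (Kedges n) (copies V E n) (card E))) \<in> o(copy_degree)"
proof -
  let ?B = "\<lambda>n. \<Sum>W\<in>{W. W \<subseteq> V \<and> card W = 3}. 4 ^ card W * n ^ (card V - card W)"
  have "\<forall>\<^sub>F n in sequentially. Gamma (Kedges n) (copies V E n) (card E) \<le> ?B n"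
  proof (rule eventually_sequentiallyI[of 3])
    fix n :: nat assume "3 \<le> n"
    then have "2 \<le> card (Kedges n)" using card_Kedges_ge[of n] by linarith
    then show "Gamma (Kedges n) (copies V E n) (card E) \<le> ?B n"
      by (rule Gamma_le[OF finite_Kedges _ card_copies_through_two_edges_le])
  qed
  then have "(\<lambda>n. real (Gamma (Kedges n) (copies V E n) (card E))) \<in> O(\<lambda>n. real (?B n))"
    by (rule bigo_of_nat_eventually_le)
  also have "(\<lambda>n. real (?B n)) \<in> o(\<lambda>n. copy_degree n powr 1)"
    by (rule sum_pow_smallo_powr[OF pow_bigo_copy_degree]) (use card_ge_3 copy_degree_nonneg in auto)
  also have "(\<lambda>n. copy_degree n powr 1) = copy_degree"
    using copy_degree_nonneg by (simp add: fun_eq_iff)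
  finally show ?thesis .
qed

end

theorem mainTheorem19:
  fixes V :: "'a set" and E :: "'a set set" and h k :: nat and Delta :: "nat \<Rightarrow> real"
  assumes "simple_graph V E"
    and "strictly_2_balanced V E"
    and "h = card V" and "k = card E"
    and "Delta = (\<lambda>n. 2 * real k * real (falling (n - 2) (h - 2)) / real (card (Aut V E)))"
  shows "(\<forall>n\<ge>h. \<forall>v\<in>Kedges n. real (degree (copies V E n) v) = Delta n)
    \<and> (\<forall>l\<in>{2..k-1}. (\<lambda>n. real (max_codegree (Kedges n) (copies V E n) l))
          \<in> o(\<lambda>n. Delta n powr (real (k - l) / real (k - 1))))
    \<and> (\<lambda>n. real (Gamma (Kedges n) (copies V E n) k)) \<in> o(\<lambda>n. Delta n)"
proof -
  interpret strictly_2_balanced_graph V E using assms(1,2) by unfold_locales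
  have Delta: "Delta = copy_degree" unfolding assms(3-5) copy_degree_def ..
  have "\<forall>n. \<forall>v\<in>Kedges n. real (degree (copies V E n) v) = Delta n"
    using degree_copies[OF simple Union_edges_eq] unfolding Delta copy_degree_def by blast
  moreover have "\<forall>l\<in>{2..k-1}. (\<lambda>n. real (max_codegree (Kedges n) (copies V E n) l))
      \<in> o(\<lambda>n. Delta n powr (real (k - l) / real (k - 1)))"
  proof
    fix l assume "l \<in> {2..k-1}"
    then have "2 \<le> l" "l < card E" using card_ge_3 assms(4) by auto
    then show "(\<lambda>n. real (max_codegree (Kedges n) (copies V E n) l))
        \<in> o(\<lambda>n. Delta n powr (real (k - l) / real (k - 1)))"
      unfolding Delta assms(4) by (rule max_codegree_smallo)
  qed
  moreover have "(\<lambda>n. real (Gamma (Kedges n) (copies V E n) k)) \<in> o(\<lambda>n. Delta n)"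
    using Gamma_smallo unfolding Delta assms(4) by simp
  ultimately show ?thesis by blast
qed

end
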